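(* Let $\lambda \geq 0$, $0 \leq \gamma \leq 1$, $0\leq\beta<1$, $\tau \in \mathbb{C}\setminus\{0\}$ and $\delta \in \mathbb{N}_0$. Let $f(z)=z+\sum_{k=2}^{\infty}a_kz^k$ belong to $\Theta_{\Sigma}(\tau,\lambda,\gamma,\delta;\beta)$. Then $$|a_2| \leq \min\left\{\frac{2|\tau|(1-\beta)}{(\delta+1)(1+\lambda+\gamma+5\lambda\gamma)},\ 2\sqrt{\frac{|\tau|(1-\beta)}{(\delta+1)(\delta+2)\big(1+2(\lambda+\gamma+5\lambda\gamma)\big)}}\right\}$$ and $$|a_3| \leq \frac{4|\tau|(1-\beta)}{(\delta+1)(\delta+2)\big(1+2(\lambda+\gamma+5\lambda\gamma)\big)}.$$
   Context: Let $\mathbb{U}=\{z\in\mathbb{C}:|z|<1\}$. $\Sigma$ denotes the class of bi-univalent functions: functions $f(z)=z+\sum_{k=2}^\infty a_kz^k$ analytic and univalent in $\mathbb{U}$ whose inverse $f^{-1}$ extends to a univalent function $g$ on $\mathbb{U}$; this $g$ has the expansion $g(w)=w-a_2w^2+(2a_2^2-a_3)w^3-\cdots$. For $\delta\in\mathbb{N}_0$ and $h(z)=z+\sum_{k\ge2}c_kz^k$ analytic in $\mathbb{U}$, the Ruscheweyh derivative is $\mathcal{R}^\delta h(z)=z+\sum_{k=2}^{\infty}\frac{\Gamma(\delta+k)}{\Gamma(k)\Gamma(\delta+1)}c_kz^k$. For such $h$ and parameters $\lambda,\gamma,\tau\neq0,\delta$, put $$J_h(z)=1+\frac{1}{\tau}\Big[(1-\lambda)(1-\gamma)\frac{\mathcal{R}^\delta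 h(z)}{z}+(\lambda(\gamma+1)+\gamma)(\mathcal{R}^\delta h)'(z)+\lambda\gamma\big(z(\mathcal{R}^\delta h)''(z)-2\big)-1\Big].$$ For $0\le\beta<1$, $\Theta_{\Sigma}(\tau,\lambda,\gamma,\delta;\beta)$ is the set of $f\in\Sigma$ such that $\operatorname{Re}J_f(z)>\beta$ for all $z\in\mathbb{U}$ and $\operatorname{Re}J_g(w)>\beta$ for all $w\in\mathbb{U}$, where $g$ is the extension of $f^{-1}$ to $\mathbb{U}$. *)

theory Defs
  imports "HOL-Analysis.Analysis"
begin

definition tcoeff :: "(complex \<Rightarrow> complex) \<Rightarrow> nat \<Rightarrow> complex" where
  "tcoeff h k = (deriv ^^ k) h 0 / of_nat (fact k)"

text \<open>Ruscheweyh coefficient Gamma(delta+k)/(Gamma(k) Gamma(delta+1)) = C(delta+k-1, delta) for k >= 1.\<close>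
definition rcoef :: "nat \<Rightarrow> nat \<Rightarrow> complex" where
  "rcoef \<delta> k = (if k = 0 then 0 else of_nat ((\<delta> + k - 1) choose \<delta>))"

definition rusch :: "nat \<Rightarrow> (complex \<Rightarrow> complex) \<Rightarrow> complex \<Rightarrow> complex" where
  "rusch \<delta> h z = (\<Sum>k. rcoef \<delta> k * tcoeff h k * z ^ k)"

text \<open>R^delta h (z) / z, as the (removable-singularity) power series sum_k rcoef(k+1) c_{k+1} z^k,
  so that it is also defined at z = 0 (value 1).\<close>
definition rusch_quot :: "nat \<Rightarrow> (complex \<Rightarrow> complex) \<Rightarrow> complex \<Rightarrow> complex" where
  "rusch_quot \<delta> h z = (\<Sum>k. rcoef \<delta> (Suc k) * tcoeff h (Suc k) * z ^ k)"

definition Jfun :: "complex \<Rightarrow> real \<Rightarrow> real \<Rightarrow> nat \<Rightarrow> (complex \<Rightarrow> complex) \<Rightarrow> complex \<Rightarrow> complex" where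
  "Jfun \<tau> lam \<gamma> \<delta> h z = 1 + (1 / \<tau>) *
     (of_real ((1 - lam) * (1 - \<gamma>)) * rusch_quot \<delta> h z
      + of_real (lam * (\<gamma> + 1) + \<gamma>) * deriv (rusch \<delta> h) z
      + of_real (lam * \<gamma>) * (z * deriv (deriv (rusch \<delta> h)) z - 2)
      - 1)"

text \<open>Bi-univalent class Sigma: f analytic, univalent, normalised on the unit disc, and f^{-1}
  (defined near 0) has a univalent analytic extension g to the unit disc.\<close>
definition bi_univalent_ext :: "(complex \<Rightarrow> complex) \<Rightarrow> (complex \<Rightarrow> complex) \<Rightarrow> bool" where
  "bi_univalent_ext f g \<longleftrightarrow>
     f holomorphic_on ball 0 1 \<and> inj_on f (ball 0 1) \<and> f 0 = 0 \<and> deriv f 0 = 1 \<and>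
     g holomorphic_on ball 0 1 \<and> inj_on g (ball 0 1) \<and>
     (\<exists>r>0. \<forall>w\<in>ball 0 r. g w \<in> ball 0 1 \<and> f (g w) = w)"

definition Theta_Sigma :: "complex \<Rightarrow> real \<Rightarrow> real \<Rightarrow> nat \<Rightarrow> real \<Rightarrow> (complex \<Rightarrow> complex) set" where
  "Theta_Sigma \<tau> lam \<gamma> \<delta> \<beta> = {f. \<exists>g. bi_univalent_ext f g \<and>
      (\<forall>z\<in>ball 0 1. Re (Jfun \<tau> lam \<gamma> \<delta> f z) > \<beta>) \<and>
      (\<forall>w\<in>ball 0 1. Re (Jfun \<tau> lam \<gamma> \<delta> g w) > \<beta>)}"

end

theory Submission
  imports Defs "HOL-Complex_Analysis.Complex_Analysis"
begin

(* Write J_h for Jfun and c_k for the coefficients of h. The power series of J_h has constant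
   term 1 and n-th coefficient rcoef(n+1) (1 + n(lam+gamma) + (n^2+2n+2) lam gamma) c_(n+1) / tau,
   and Re J_h > beta on the disc, so Caratheodory's lemma |p_n| <= 2(1 - beta) bounds these
   coefficients. For h = f this gives the bounds on |a_2| and |a_3|. For h = g, comparing
   coefficients in f(g(w)) = w gives g_3 = 2 a_2^2 - a_3, and adding the bounds for a_3 and
   2 a_2^2 - a_3 bounds 2 |a_2|^2.
   Caratheodory's lemma itself: averaging p(omega^k z) over the n-th roots of unity omega^k
   removes the coefficients below n, and the Cauchy estimate applied to the Cayley transform
   (p - 1)/(p + 1), which maps the disc into the disc, bounds the first remaining one. *)

lemma tcoeff_eq_fps_expansion_nth: "tcoeff h k = fps_expansion h 0 $ k"
  by (simp add: tcoeff_def fps_expansion_def)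

lemma tcoeff_eq_fps_nth:
  assumes "h has_fps_expansion H"
  shows "tcoeff h n = H $ n"
  using fps_nth_fps_expansion[OF assms, of n] by (simp add: tcoeff_def)

lemma has_fps_expansion_unit_disc:
  "h holomorphic_on ball 0 1 \<Longrightarrow> h has_fps_expansion fps_expansion h 0"
  by (rule has_fps_expansion_fps_expansion) auto

lemma norm_tcoeff_le_bound_on_disc:
  assumes hol: "w holomorphic_on ball 0 1" and bound: "\<And>z. z \<in> ball 0 1 \<Longrightarrow> norm (w z) \<le> M"
  shows "norm (tcoeff w n) \<le> M"
proof -
  have Cauchy: "norm ((deriv ^^ n) w 0) \<le> fact n * M / r ^ n" if r: "0 < r" "r < 1" for r :: real
  proof (rule Cauchy_inequality)
    show "w holomorphic_on ball 0 r"
      using hol by (rule holomorphic_on_subset) (use r in auto)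
    show "continuous_on (cball 0 r) w"
      using holomorphic_on_imp_continuous_on[OF hol] by (rule continuous_on_subset) (use r in auto)
    show "norm (w x) \<le> M" if "norm (0 - x) = r" for x
      using bound that r by auto
  qed (use r in auto)
  have "((\<lambda>r. fact n * M / r ^ n) \<longlongrightarrow> fact n * M / 1 ^ n) (at_left (1::real))"
    by (intro tendsto_intros) auto
  moreover have "eventually (\<lambda>r. norm ((deriv ^^ n) w 0) \<le> fact n * M / r ^ n) (at_left (1::real))"
    using eventually_at_left_real[OF zero_less_one] by eventually_elim (use Cauchy in auto)
  ultimately have "norm ((deriv ^^ n) w 0) \<le> fact n * M"
    using tendsto_lowerbound by fastforce
  then show ?thesis
    by (simp add: tcoeff_def norm_divide divide_le_eq mult.commute)
qed

lemma Cayley_fps_lowest_coeff: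
  fixes W Q :: "complex fps"
  assumes eq: "W * (Q + 1) = Q - 1" and Q0: "Q $ 0 = 1" and "0 < n"
    and low: "\<And>k. 0 < k \<Longrightarrow> k < n \<Longrightarrow> Q $ k = 0"
  shows "Q $ n = 2 * W $ n"
proof -
  have W_low: "W $ k = 0" if "k < n" for k
  proof -
    have "(W * (Q + 1)) $ k = (\<Sum>i=0..k. if i = k then 2 * W $ k else 0)"
      unfolding fps_mult_nth by (intro sum.cong refl) (use that in \<open>auto simp: Q0 low\<close>)
    then show ?thesis
      using arg_cong[OF eq, of "\<lambda>F. fps_nth F k"] Q0 low[of k] that by (cases "k = 0") auto
  qed
  have "(W * (Q + 1)) $ n = (\<Sum>i=0..n. if i = n then 2 * W $ n else 0)"
    unfolding fps_mult_nth by (intro sum.cong refl) (auto simp: Q0 W_low)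
  then show ?thesis
    using arg_cong[OF eq, of "\<lambda>F. fps_nth F n"] \<open>0 < n\<close> by simp
qed

lemma Re_pos_lowest_tcoeff_bound:
  assumes hol: "q holomorphic_on ball 0 1" and re: "\<And>z. z \<in> ball 0 1 \<Longrightarrow> Re (q z) > 0"
    and q0: "q 0 = 1" and "0 < n" and low: "\<And>k. 0 < k \<Longrightarrow> k < n \<Longrightarrow> tcoeff q k = 0"
  shows "norm (tcoeff q n) \<le> 2"
proof -
  define w where "w = (\<lambda>z. (q z - 1) / (q z + 1))"
  have nz: "q z + 1 \<noteq> 0" if "z \<in> ball 0 1" for z
    using re[OF that] by (auto simp: complex_eq_iff)
  have "w holomorphic_on ball 0 1"
    unfolding w_def using nz by (intro holomorphic_intros hol) auto
  moreover have "norm (w z) \<le> 1" if z: "z \<in> ball 0 1" for z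
  proof -
    have "(norm (q z - 1))\<^sup>2 \<le> (norm (q z + 1))\<^sup>2"
      unfolding cmod_power2 using re[OF z] by (simp add: power2_eq_square algebra_simps)
    then have "norm (q z - 1) \<le> norm (q z + 1)"
      by (rule power2_le_imp_le) simp
    then show ?thesis using nz[OF z] by (simp add: w_def norm_divide divide_le_eq)
  qed
  ultimately have W_bound: "norm (tcoeff w n) \<le> 1"
    by (rule norm_tcoeff_le_bound_on_disc)
  define Q where "Q = fps_expansion q 0"
  define W where "W = fps_expansion w 0"
  have hq: "q has_fps_expansion Q"
    unfolding Q_def using hol by (rule has_fps_expansion_unit_disc)
  have hw: "w has_fps_expansion W"
    unfolding W_def using \<open>w holomorphic_on ball 0 1\<close> by (rule has_fps_expansion_unit_disc)
  have "eventually (\<lambda>z. z \<in> ball 0 1) (nhds 0)"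
    by (intro eventually_nhds_in_open) auto
  then have ev: "eventually (\<lambda>z. w z * (q z + 1) = q z - 1) (nhds 0)"
    by eventually_elim (use nz in \<open>auto simp: w_def\<close>)
  have "(\<lambda>z. w z * (q z + 1)) has_fps_expansion W * (Q + 1)"
    by (intro has_fps_expansion_mult has_fps_expansion_add hw hq has_fps_expansion_1)
  then have "(\<lambda>z. q z - 1) has_fps_expansion W * (Q + 1)"
    using has_fps_expansion_cong[OF ev refl] by simp
  then have "W * (Q + 1) = Q - 1"
    using fps_expansion_unique_complex has_fps_expansion_diff[OF hq has_fps_expansion_1] by blast
  then have "Q $ n = 2 * W $ n"
    by (rule Cayley_fps_lowest_coeff)
      (use q0 \<open>0 < n\<close> low in
        \<open>simp_all add: Q_def tcoeff_eq_fps_expansion_nth fps_expansion_def\<close>)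
  then show ?thesis
    using W_bound by (simp add: Q_def W_def tcoeff_eq_fps_expansion_nth norm_mult)
qed

lemma sum_powers_root_unity:
  assumes "0 < n"
  shows "(\<Sum>k<n. exp (2 * of_real pi * \<i> * of_nat m / of_nat n) ^ k) = (if n dvd m then of_nat n else 0)"
proof (cases "n dvd m")
  case True
  then show ?thesis
    using complex_root_unity_eq_1[of n m] assms by simp
next
  case False
  define \<zeta> where "\<zeta> = exp (2 * of_real pi * \<i> * of_nat m / of_nat n)"
  have "\<zeta> \<noteq> 1" "\<zeta> ^ n = 1"
    using False complex_root_unity_eq_1[of n m] complex_root_unity[of n m] assms by (auto simp: \<zeta>_def)
  then show ?thesis
    using False by (simp add: \<zeta>_def[symmetric] geometric_sum)
qed

lemma tcoeff_root_unity_average: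
  assumes hol: "p holomorphic_on ball 0 1" and "0 < n"
  defines "\<omega> \<equiv> exp (2 * of_real pi * \<i> / of_nat n)"
  shows "tcoeff (\<lambda>z. (\<Sum>k<n. p (\<omega> ^ k * z)) / of_nat n) m = (if n dvd m then tcoeff p m else 0)"
proof -
  define P where "P = fps_expansion p 0"
  have hp: "p has_fps_expansion P"
    unfolding P_def using hol by (rule has_fps_expansion_unit_disc)
  have rot: "(\<lambda>z. p (c * z)) has_fps_expansion fps_compose P (fps_const c * fps_X)" for c
    using has_fps_expansion_compose[OF hp has_fps_expansion_cmult_left[OF has_fps_expansion_fps_X]]
    by (simp add: o_def)
  have "(\<lambda>z. (\<Sum>k<n. p (\<omega> ^ k * z)) / of_nat n) has_fps_expansion
          fps_const (1 / of_nat n) * (\<Sum>k<n. fps_compose P (fps_const (\<omega> ^ k) * fps_X))"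
  proof -
    have "(\<lambda>z. 1 / of_nat n * (\<Sum>k<n. p (\<omega> ^ k * z))) has_fps_expansion
            fps_const (1 / of_nat n) * (\<Sum>k<n. fps_compose P (fps_const (\<omega> ^ k) * fps_X))"
      by (intro has_fps_expansion_cmult_left has_fps_expansion_sum rot)
    then show ?thesis by simp
  qed
  then have "tcoeff (\<lambda>z. (\<Sum>k<n. p (\<omega> ^ k * z)) / of_nat n) m =
               1 / of_nat n * (\<Sum>k<n. (\<omega> ^ k) ^ m * P $ m)"
    by (simp only: tcoeff_eq_fps_nth fps_mult_left_const_nth fps_sum_nth fps_nth_compose_linear)
  also have "\<dots> = P $ m / of_nat n * (\<Sum>k<n. (\<omega> ^ m) ^ k)"
    by (simp add: sum_distrib_left power_mult[symmetric] mult.commute)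
  also have "\<omega> ^ m = exp (2 * of_real pi * \<i> * of_nat m / of_nat n)"
    by (simp add: \<omega>_def exp_of_nat_mult[symmetric] mult_ac)
  finally show ?thesis
    using \<open>0 < n\<close> by (simp add: sum_powers_root_unity P_def tcoeff_eq_fps_expansion_nth)
qed

lemma Caratheodory_tcoeff_bound:
  assumes hol: "p holomorphic_on ball 0 1" and re: "\<And>z. z \<in> ball 0 1 \<Longrightarrow> Re (p z) > 0"
    and p0: "p 0 = 1" and "0 < n"
  shows "norm (tcoeff p n) \<le> 2"
proof -
  define \<omega> :: complex where "\<omega> = exp (2 * of_real pi * \<i> / of_nat n)"
  define q where "q = (\<lambda>z. (\<Sum>k<n. p (\<omega> ^ k * z)) / of_nat n)"
  have rot: "\<omega> ^ k * z \<in> ball 0 1" if "z \<in> ball 0 1" for k z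
    using that by (simp add: \<omega>_def norm_mult norm_power norm_exp_eq_Re)
  have hol_q: "q holomorphic_on ball 0 1"
    unfolding q_def using rot
    by (intro holomorphic_intros holomorphic_on_compose_gen[OF _ hol, unfolded o_def]) auto
  have re_q: "Re (q z) > 0" if "z \<in> ball 0 1" for z
    using \<open>0 < n\<close> re[OF rot[OF that]]
    by (auto simp: q_def Re_divide_of_nat intro!: divide_pos_pos sum_pos)
  have q0: "q 0 = 1"
    using \<open>0 < n\<close> by (simp add: q_def p0)
  have tcoeff_q: "tcoeff q k = (if n dvd k then tcoeff p k else 0)" for k
    unfolding q_def \<omega>_def using hol \<open>0 < n\<close> by (rule tcoeff_root_unity_average)
  then have "tcoeff q k = 0" if "0 < k" "k < n" for k
    using that by (auto dest: dvd_imp_le)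
  with hol_q re_q q0 \<open>0 < n\<close> have "norm (tcoeff q n) \<le> 2"
    by (rule Re_pos_lowest_tcoeff_bound)
  then show ?thesis
    by (simp add: tcoeff_q)
qed

lemma Caratheodory_tcoeff_bound_Re_gt:
  assumes hol: "p holomorphic_on ball 0 1" and re: "\<And>z. z \<in> ball 0 1 \<Longrightarrow> Re (p z) > \<beta>"
    and "\<beta> < 1" and p0: "p 0 = 1" and "0 < n"
  shows "norm (tcoeff p n) \<le> 2 * (1 - \<beta>)"
proof -
  define c where "c = complex_of_real (1 / (1 - \<beta>))"
  define p1 where "p1 = (\<lambda>z. c * (p z - of_real \<beta>))"
  have "p1 holomorphic_on ball 0 1"
    unfolding p1_def by (intro holomorphic_intros hol)
  moreover have "Re (p1 z) > 0" if "z \<in> ball 0 1" for z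
    using re[OF that] \<open>\<beta> < 1\<close> by (simp add: p1_def c_def)
  moreover have "p1 0 = 1"
    using \<open>\<beta> < 1\<close> by (simp add: p1_def c_def p0 field_simps)
  ultimately have "norm (tcoeff p1 n) \<le> 2"
    using \<open>0 < n\<close> by (rule Caratheodory_tcoeff_bound)
  have hp1: "p1 has_fps_expansion fps_const c * (fps_expansion p 0 - fps_const (of_real \<beta>))"
    unfolding p1_def using hol
    by (intro has_fps_expansion_cmult_left has_fps_expansion_diff has_fps_expansion_unit_disc
        has_fps_expansion_const)
  then have "tcoeff p1 n = c * tcoeff p n"
    unfolding tcoeff_eq_fps_nth[OF hp1] using \<open>0 < n\<close> by (simp add: tcoeff_eq_fps_expansion_nth)
  moreover have "norm (1 - complex_of_real \<beta>) = 1 - \<beta>"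
    using \<open>\<beta> < 1\<close> by (metis norm_of_real of_real_1 of_real_diff abs_of_pos diff_gt_0_iff_gt)
  ultimately have "norm (tcoeff p n) = (1 - \<beta>) * norm (tcoeff p1 n)"
    using \<open>\<beta> < 1\<close> by (simp add: c_def norm_divide)
  then show ?thesis
    using mult_left_mono[OF \<open>norm (tcoeff p1 n) \<le> 2\<close>, of "1 - \<beta>"] \<open>\<beta> < 1\<close>
    by simp
qed

lemma fps_compose_eq_X_coeffs:
  fixes F G :: "'a::field fps"
  assumes comp: "F oo G = fps_X" and F1: "F $ 1 = 1" and G0: "G $ 0 = 0"
  shows "G $ 1 = 1" "G $ 2 = - F $ 2" "G $ 3 = 2 * (F $ 2)\<^sup>2 - F $ 3"
proof -
  have c: "(F oo G) $ k = fps_X $ k" for k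
    by (simp add: comp)
  show G1: "G $ 1 = 1"
    using c[of 1] F1 G0 by (simp add: fps_compose_nth)
  show G2: "G $ 2 = - F $ 2"
    using c[of 2] F1 G0 G1
    by (simp add: fps_compose_nth numeral_2_eq_2 fps_mult_nth eq_neg_iff_add_eq_0)
  show "G $ 3 = 2 * (F $ 2)\<^sup>2 - F $ 3"
    using c[of 3] F1 G0 G1 G2
    by (simp add: fps_compose_nth numeral_3_eq_3 numeral_2_eq_2 fps_mult_nth power2_eq_square
        algebra_simps)
qed

lemma bi_univalent_ext_fps_compose:
  assumes "bi_univalent_ext f g"
  shows "fps_expansion f 0 oo fps_expansion g 0 = fps_X" "g 0 = 0"
proof -
  have hol_f: "f holomorphic_on ball 0 1" and inj: "inj_on f (ball 0 1)" and "f 0 = 0"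
    and hol_g: "g holomorphic_on ball 0 1"
    using assms by (auto simp: bi_univalent_ext_def)
  obtain r where "r > 0" and inv: "\<And>w. w \<in> ball 0 r \<Longrightarrow> g w \<in> ball 0 1 \<and> f (g w) = w"
    using assms by (auto simp: bi_univalent_ext_def)
  show g0: "g 0 = 0"
    using inj inv[of 0] \<open>r > 0\<close> \<open>f 0 = 0\<close> by (auto simp: inj_on_def)
  have hf: "f has_fps_expansion fps_expansion f 0" and hg: "g has_fps_expansion fps_expansion g 0"
    using hol_f hol_g by (auto intro: has_fps_expansion_unit_disc)
  have "fps_expansion g 0 $ 0 = 0"
    using g0 by (simp add: fps_expansion_def)
  then have comp: "(f \<circ> g) has_fps_expansion (fps_expansion f 0 oo fps_expansion g 0)"
    by (rule has_fps_expansion_compose[OF hf hg])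
  have ev: "eventually (\<lambda>w. (f \<circ> g) w = w) (nhds 0)"
    using eventually_nhds_in_open[of "ball 0 r" 0] \<open>r > 0\<close> by (auto elim!: eventually_mono simp: inv)
  have "(\<lambda>w. w) has_fps_expansion (fps_expansion f 0 oo fps_expansion g 0)"
    using has_fps_expansion_cong[OF ev refl] comp by (simp add: o_def)
  then show "fps_expansion f 0 oo fps_expansion g 0 = fps_X"
    using fps_expansion_unique_complex has_fps_expansion_fps_X by blast
qed

lemma bi_univalent_ext_inverse_tcoeffs:
  assumes "bi_univalent_ext f g"
  shows "deriv g 0 = 1" "tcoeff g 2 = - tcoeff f 2" "tcoeff g 3 = 2 * (tcoeff f 2)\<^sup>2 - tcoeff f 3"
proof -
  note comp = bi_univalent_ext_fps_compose[OF assms]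
  have "fps_expansion f 0 $ 1 = 1"
    using assms by (simp add: bi_univalent_ext_def fps_expansion_def)
  note G = fps_compose_eq_X_coeffs[OF comp(1) this]
  show "deriv g 0 = 1" "tcoeff g 2 = - tcoeff f 2" "tcoeff g 3 = 2 * (tcoeff f 2)\<^sup>2 - tcoeff f 3"
    using G comp(2) by (simp_all add: tcoeff_eq_fps_expansion_nth fps_expansion_def)
qed

lemma fps_nth_deriv_funpow:
  fixes H :: "'a::field_char_0 fps"
  shows "(fps_deriv ^^ j) H $ m = fact (m + j) / fact m * H $ (m + j)"
proof (induction j arbitrary: m)
  case 0
  then show ?case by simp
next
  case (Suc j)
  have "(fps_deriv ^^ Suc j) H $ m = of_nat (m + 1) * (fps_deriv ^^ j) H $ (m + 1)"
    by (simp add: fps_deriv_def)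
  also have "\<dots> = of_nat (Suc m) * (fact (m + Suc j) / (of_nat (Suc m) * fact m) * H $ (m + Suc j))"
    by (simp only: Suc.IH fact_Suc) simp
  also have "\<dots> = fact (m + Suc j) / fact m * H $ (m + Suc j)"
    by (simp del: of_nat_Suc)
  finally show ?case .
qed

lemma fps_conv_radius_deriv_funpow:
  fixes H :: "'a::{banach, real_normed_field} fps"
  shows "fps_conv_radius ((fps_deriv ^^ j) H) \<ge> fps_conv_radius H"
  by (induction j) (auto intro: order_trans[OF _ fps_conv_radius_deriv])

definition rusch_fps :: "nat \<Rightarrow> (complex \<Rightarrow> complex) \<Rightarrow> complex fps" where
  "rusch_fps \<delta> h = Abs_fps (\<lambda>k. rcoef \<delta> k * tcoeff h k)"

definition rusch_quot_fps :: "nat \<Rightarrow> (complex \<Rightarrow> complex) \<Rightarrow> complex fps" where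
  "rusch_quot_fps \<delta> h = Abs_fps (\<lambda>k. rcoef \<delta> (Suc k) * tcoeff h (Suc k))"

lemma rusch_eq_eval_fps: "rusch \<delta> h = eval_fps (rusch_fps \<delta> h)"
  by (simp add: fun_eq_iff rusch_def eval_fps_def rusch_fps_def)

lemma rusch_quot_eq_eval_fps: "rusch_quot \<delta> h = eval_fps (rusch_quot_fps \<delta> h)"
  by (simp add: fun_eq_iff rusch_quot_def eval_fps_def rusch_quot_fps_def)

lemma rusch_fps_eq_fps_X_times: "rusch_fps \<delta> h = fps_X * rusch_quot_fps \<delta> h"
  by (rule fps_ext) (auto simp: rusch_fps_def rusch_quot_fps_def rcoef_def gr0_conv_Suc)

(* R^delta h(z)/z = (z^delta h(z)/z)^(delta) / delta!, so the Ruscheweyh series converges where h does. *)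
lemma rusch_quot_fps_eq_deriv_funpow:
  "rusch_quot_fps \<delta> h =
     fps_const (1 / fact \<delta>) * (fps_deriv ^^ \<delta>) (fps_X ^ \<delta> * fps_shift 1 (fps_expansion h 0))"
proof (rule fps_ext)
  fix m
  have "(of_nat ((\<delta> + m) choose \<delta>) :: complex) = fact (\<delta> + m) / (fact \<delta> * fact m)"
    by (subst binomial_fact) auto
  then show "rusch_quot_fps \<delta> h $ m = (fps_const (1 / fact \<delta>) *
      (fps_deriv ^^ \<delta>) (fps_X ^ \<delta> * fps_shift 1 (fps_expansion h 0))) $ m"
    unfolding fps_mult_left_const_nth fps_nth_deriv_funpow
    by (simp add: rusch_quot_fps_def rcoef_def fps_X_power_mult_nth tcoeff_eq_fps_expansion_nth add.commute)
qed

lemma fps_conv_radius_rusch_fps: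
  assumes "h holomorphic_on ball 0 1"
  shows "fps_conv_radius (rusch_quot_fps \<delta> h) \<ge> 1" "fps_conv_radius (rusch_fps \<delta> h) \<ge> 1"
proof -
  have "h holomorphic_on eball 0 (ereal 1)"
    using assms by simp
  then have "fps_conv_radius (fps_expansion h 0) \<ge> 1"
    using conv_radius_fps_expansion by (simp add: one_ereal_def)
  then have "fps_conv_radius (fps_X ^ \<delta> * fps_shift 1 (fps_expansion h 0)) \<ge> 1"
    using fps_conv_radius_mult[of "fps_X ^ \<delta>" "fps_shift 1 (fps_expansion h 0)"] by simp
  then show "fps_conv_radius (rusch_quot_fps \<delta> h) \<ge> 1"
    unfolding rusch_quot_fps_eq_deriv_funpow
    by (subst fps_conv_radius_cmult_left) (auto intro: order_trans[OF _ fps_conv_radius_deriv_funpow])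
  then show "fps_conv_radius (rusch_fps \<delta> h) \<ge> 1"
    unfolding rusch_fps_eq_fps_X_times using fps_conv_radius_mult[of fps_X "rusch_quot_fps \<delta> h"] by simp
qed

definition Jfun_fps :: "complex \<Rightarrow> real \<Rightarrow> real \<Rightarrow> nat \<Rightarrow> (complex \<Rightarrow> complex) \<Rightarrow> complex fps" where
  "Jfun_fps \<tau> lam \<gamma> \<delta> h = 1 + fps_const (1 / \<tau>) *
     (fps_const (of_real ((1 - lam) * (1 - \<gamma>))) * rusch_quot_fps \<delta> h
      + fps_const (of_real (lam * (\<gamma> + 1) + \<gamma>)) * fps_deriv (rusch_fps \<delta> h)
      + fps_const (of_real (lam * \<gamma>)) * (fps_X * fps_deriv (fps_deriv (rusch_fps \<delta> h)) - 2)
      - 1)"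

lemma Jfun_has_fps_expansion:
  assumes "h holomorphic_on ball 0 1"
  shows "Jfun \<tau> lam \<gamma> \<delta> h has_fps_expansion Jfun_fps \<tau> lam \<gamma> \<delta> h"
proof -
  have "fps_conv_radius (rusch_fps \<delta> h) > 0" "fps_conv_radius (rusch_quot_fps \<delta> h) > 0"
    using fps_conv_radius_rusch_fps[OF assms, of \<delta>] by (auto intro: order.strict_trans2[of 0 1])
  then show ?thesis
    unfolding Jfun_def Jfun_fps_def rusch_eq_eval_fps rusch_quot_eq_eval_fps
    by (intro fps_expansion_intros eval_fps_has_fps_expansion)
qed

lemma Jfun_holomorphic:
  assumes "h holomorphic_on ball 0 1"
  shows "Jfun \<tau> lam \<gamma> \<delta> h holomorphic_on ball 0 1"
proof -
  have "ball 0 1 \<subseteq> eball 0 (fps_conv_radius (rusch_fps \<delta> h))"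
    "ball 0 1 \<subseteq> eball 0 (fps_conv_radius (rusch_quot_fps \<delta> h))"
    using fps_conv_radius_rusch_fps[OF assms, of \<delta>] by (auto intro!: ball_eball_mono simp: one_ereal_def)
  then show ?thesis
    unfolding Jfun_def rusch_eq_eval_fps rusch_quot_eq_eval_fps
    by (intro holomorphic_intros holomorphic_on_eval_fps holomorphic_deriv) auto
qed

lemma tcoeff_Jfun:
  assumes "h holomorphic_on ball 0 1" and "deriv h 0 = 1"
  shows "tcoeff (Jfun \<tau> lam \<gamma> \<delta> h) 0 = 1"
    and "0 < n \<Longrightarrow> tcoeff (Jfun \<tau> lam \<gamma> \<delta> h) n = rcoef \<delta> (Suc n) *
           of_real (1 + real n * (lam + \<gamma>) + ((real n)\<^sup>2 + 2 * real n + 2) * lam * \<gamma>) *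
           tcoeff h (Suc n) / \<tau>"
proof -
  have "tcoeff h 1 = 1"
    using assms(2) by (simp add: tcoeff_def)
  then show "tcoeff (Jfun \<tau> lam \<gamma> \<delta> h) 0 = 1"
    unfolding tcoeff_eq_fps_nth[OF Jfun_has_fps_expansion[OF assms(1)]]
    by (simp add: Jfun_fps_def rusch_fps_def rusch_quot_fps_def rcoef_def algebra_simps)
  show "tcoeff (Jfun \<tau> lam \<gamma> \<delta> h) n = rcoef \<delta> (Suc n) *
           of_real (1 + real n * (lam + \<gamma>) + ((real n)\<^sup>2 + 2 * real n + 2) * lam * \<gamma>) *
           tcoeff h (Suc n) / \<tau>" if "0 < n"
    unfolding tcoeff_eq_fps_nth[OF Jfun_has_fps_expansion[OF assms(1)]] using that
    by (simp add: Jfun_fps_def rusch_fps_def rusch_quot_fps_def fps_numeral_nth power2_eq_square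
        algebra_simps add_divide_distrib)
qed

lemma rcoef_2: "rcoef \<delta> 2 = of_nat (\<delta> + 1)"
  by (simp add: rcoef_def)

lemma rcoef_3: "2 * rcoef \<delta> 3 = of_nat ((\<delta> + 1) * (\<delta> + 2))"
proof -
  have "2 * rcoef \<delta> 3 = of_nat (2 * (\<delta> + 2 choose \<delta>))"
    by (simp add: rcoef_def)
  also have "\<delta> + 2 choose \<delta> = \<delta> + 2 choose 2"
    by (subst binomial_symmetric) auto
  also have "2 * (\<delta> + 2 choose 2) = (\<delta> + 1) * (\<delta> + 2)"
    by (simp add: choose_two)
  finally show ?thesis .
qed

lemma Jfun_tcoeff_bound:
  assumes hol: "h holomorphic_on ball 0 1" and h1: "deriv h 0 = 1" and "\<tau> \<noteq> 0" and "\<beta> < 1"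
    and re: "\<And>z. z \<in> ball 0 1 \<Longrightarrow> Re (Jfun \<tau> lam \<gamma> \<delta> h z) > \<beta>" and "0 < n"
  shows "norm (rcoef \<delta> (Suc n)) *
           \<bar>1 + real n * (lam + \<gamma>) + ((real n)\<^sup>2 + 2 * real n + 2) * lam * \<gamma>\<bar> *
           norm (tcoeff h (Suc n)) \<le> 2 * norm \<tau> * (1 - \<beta>)"
proof -
  have "Jfun \<tau> lam \<gamma> \<delta> h 0 = 1"
    using tcoeff_Jfun(1)[OF hol h1] by (simp add: tcoeff_def)
  then have "norm (tcoeff (Jfun \<tau> lam \<gamma> \<delta> h) n) \<le> 2 * (1 - \<beta>)"
    using Caratheodory_tcoeff_bound_Re_gt[OF Jfun_holomorphic[OF hol] re \<open>\<beta> < 1\<close>] \<open>0 < n\<close>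
    by blast
  then show ?thesis
    using \<open>\<tau> \<noteq> 0\<close>
    unfolding tcoeff_Jfun(2)[OF hol h1 \<open>0 < n\<close>] norm_mult norm_divide norm_of_real
    by (simp add: divide_le_eq mult_ac)
qed

lemma Jfun_tcoeff_bounds:
  assumes "h holomorphic_on ball 0 1" and "deriv h 0 = 1" and "\<tau> \<noteq> 0" and "\<beta> < 1"
    and "\<And>z. z \<in> ball 0 1 \<Longrightarrow> Re (Jfun \<tau> lam \<gamma> \<delta> h z) > \<beta>"
  shows "(real \<delta> + 1) * \<bar>1 + lam + \<gamma> + 5 * lam * \<gamma>\<bar> * norm (tcoeff h 2) \<le> 2 * norm \<tau> * (1 - \<beta>)"
    and "(real \<delta> + 1) * (real \<delta> + 2) * \<bar>1 + 2 * (lam + \<gamma> + 5 * lam * \<gamma>)\<bar> * norm (tcoeff h 3)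
           \<le> 4 * norm \<tau> * (1 - \<beta>)"
proof -
  note bound = Jfun_tcoeff_bound[OF assms]
  have "1 + real 1 * (lam + \<gamma>) + ((real 1)\<^sup>2 + 2 * real 1 + 2) * lam * \<gamma> =
          1 + lam + \<gamma> + 5 * lam * \<gamma>"
    by simp
  then have "norm (rcoef \<delta> 2) * \<bar>1 + lam + \<gamma> + 5 * lam * \<gamma>\<bar> * norm (tcoeff h 2)
               \<le> 2 * norm \<tau> * (1 - \<beta>)"
    using bound[of 1, unfolded Suc_1] by (simp add: add.assoc)
  moreover have "norm (rcoef \<delta> 2) = real \<delta> + 1"
    unfolding rcoef_2 norm_of_nat by simp
  ultimately show "(real \<delta> + 1) * \<bar>1 + lam + \<gamma> + 5 * lam * \<gamma>\<bar> * norm (tcoeff h 2)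
                     \<le> 2 * norm \<tau> * (1 - \<beta>)"
    by simp
  have "1 + real 2 * (lam + \<gamma>) + ((real 2)\<^sup>2 + 2 * real 2 + 2) * lam * \<gamma> =
          1 + 2 * (lam + \<gamma> + 5 * lam * \<gamma>)"
    by simp
  then have "norm (rcoef \<delta> 3) * \<bar>1 + 2 * (lam + \<gamma> + 5 * lam * \<gamma>)\<bar> * norm (tcoeff h 3)
               \<le> 2 * norm \<tau> * (1 - \<beta>)"
    using bound[of 2] by (simp add: algebra_simps)
  moreover have r3: "(real \<delta> + 1) * (real \<delta> + 2) = 2 * norm (rcoef \<delta> 3)"
    using arg_cong[OF rcoef_3[of \<delta>], of norm] unfolding norm_mult norm_of_nat
    by (simp add: algebra_simps)
  ultimately show "(real \<delta> + 1) * (real \<delta> + 2) * \<bar>1 + 2 * (lam + \<gamma> + 5 * lam * \<gamma>)\<bar> *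
                     norm (tcoeff h 3) \<le> 4 * norm \<tau> * (1 - \<beta>)"
    unfolding r3 by linarith
qed

lemma norm_le_sqrt_if_inverse_coeff_bounds:
  fixes a b :: complex
  assumes "norm b \<le> K" and "norm (2 * a\<^sup>2 - b) \<le> K"
  shows "norm a \<le> sqrt K"
proof -
  have "2 * (norm a)\<^sup>2 = norm (b + (2 * a\<^sup>2 - b))"
    by (simp add: norm_mult norm_power)
  also have "\<dots> \<le> 2 * K"
    using norm_triangle_ineq[of b "2 * a\<^sup>2 - b"] assms by linarith
  finally show ?thesis
    by (simp add: real_le_rsqrt)
qed

theorem corollary6:
  fixes \<tau> :: complex and lam \<gamma> \<beta> :: real and \<delta> :: nat and f :: "complex \<Rightarrow> complex"
  assumes "lam \<ge> 0" and "0 \<le> \<gamma>" and "\<gamma> \<le> 1" and "0 \<le> \<beta>" and "\<beta> < 1" and "\<tau> \<noteq> 0"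
    and "f \<in> Theta_Sigma \<tau> lam \<gamma> \<delta> \<beta>"
  shows "cmod (tcoeff f 2) \<le> min
            (2 * cmod \<tau> * (1 - \<beta>) / ((real \<delta> + 1) * (1 + lam + \<gamma> + 5 * lam * \<gamma>)))
            (2 * sqrt (cmod \<tau> * (1 - \<beta>) /
               ((real \<delta> + 1) * (real \<delta> + 2) * (1 + 2 * (lam + \<gamma> + 5 * lam * \<gamma>))))) \<and>
         cmod (tcoeff f 3) \<le> 4 * cmod \<tau> * (1 - \<beta>) /
               ((real \<delta> + 1) * (real \<delta> + 2) * (1 + 2 * (lam + \<gamma> + 5 * lam * \<gamma>)))"
proof -
  obtain g where bu: "bi_univalent_ext f g"
    and re_f: "\<And>z. z \<in> ball 0 1 \<Longrightarrow> Re (Jfun \<tau> lam \<gamma> \<delta> f z) > \<beta>"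
    and re_g: "\<And>w. w \<in> ball 0 1 \<Longrightarrow> Re (Jfun \<tau> lam \<gamma> \<delta> g w) > \<beta>"
    using assms(7) unfolding Theta_Sigma_def by blast
  have "f holomorphic_on ball 0 1" "deriv f 0 = 1" "g holomorphic_on ball 0 1"
    using bu by (auto simp: bi_univalent_ext_def)
  note inv = bi_univalent_ext_inverse_tcoeffs[OF bu]
  note bound_f = Jfun_tcoeff_bounds[OF \<open>f holomorphic_on _\<close> \<open>deriv f 0 = 1\<close> assms(6,5) re_f]
  note bound_g = Jfun_tcoeff_bounds[OF \<open>g holomorphic_on _\<close> inv(1) assms(6,5) re_g]
  define D where "D = (real \<delta> + 1) * (real \<delta> + 2) * (1 + 2 * (lam + \<gamma> + 5 * lam * \<gamma>))"
  have "1 + lam + \<gamma> + 5 * lam * \<gamma> > 0" "1 + 2 * (lam + \<gamma> + 5 * lam * \<gamma>) > 0"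
    using assms(1,2) by (simp_all add: add_pos_nonneg)
  then have "D > 0" "(real \<delta> + 1) * (1 + lam + \<gamma> + 5 * lam * \<gamma>) > 0"
    by (simp_all add: D_def)
  then have a3: "norm (tcoeff f 3) \<le> 4 * cmod \<tau> * (1 - \<beta>) / D"
    and b3: "norm (2 * (tcoeff f 2)\<^sup>2 - tcoeff f 3) \<le> 4 * cmod \<tau> * (1 - \<beta>) / D"
    and "norm (tcoeff f 2) \<le> 2 * cmod \<tau> * (1 - \<beta>) / ((real \<delta> + 1) * (1 + lam + \<gamma> + 5 * lam * \<gamma>))"
    using bound_f bound_g assms(1,2) by (simp_all add: inv D_def pos_le_divide_eq mult_ac)
  moreover have "norm (tcoeff f 2) \<le> sqrt (4 * cmod \<tau> * (1 - \<beta>) / D)"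
    using a3 b3 by (rule norm_le_sqrt_if_inverse_coeff_bounds)
  moreover have "sqrt (4 * cmod \<tau> * (1 - \<beta>) / D) = 2 * sqrt (cmod \<tau> * (1 - \<beta>) / D)"
    by (simp add: real_sqrt_mult mult.assoc times_divide_eq_right[symmetric] del: times_divide_eq_right)
  ultimately show ?thesis
    by (simp add: D_def)
qed

end
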